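(* Let $G=(V,E)$ be a (not necessarily connected) graph with $|V|=n\ge1$ and adjacency matrix $A$, let $m\ge1$, and assume $\bar K_m+G$ is not a complete graph. Define \begin{itemize} \item $\Lambda_0=\{-m\}$ if $m\ge2$ and $m$ is an eigenvalue of $J-A$, and $\Lambda_0=\emptyset$ otherwise; \item $\Lambda_1$ = the set of $\alpha\in\mathbb{R}\setminus(\mathrm{ev}(A)\cup\{0,-m,-2m\})$ satisfying $(\alpha+2m)\langle\mathbf 1,(A-\alpha I)^{-1}\mathbf 1\rangle-m=0$; \item $\Lambda_2=\{-2m\}$ if $-2m\in\mathrm{ev}(A)$, and $\Lambda_2=\emptyset$ otherwise; \item $\Lambda_3$ = the set of $\alpha\in\mathrm{ev}(A)\setminus\{0,-m,-2m\}$ for which there is $g\in\mathbb{R}^n$ with $Ag=\alpha g$, $\langle g,g\rangle=1$, $\langle\mathbf 1,g\rangle=0$. \end{itemize} Then \[ \mathrm{QEC}(\bar K_m+G)=-\tilde\alpha-2,\qquad \tilde\alpha=\min(\Lambda_0\cup\Lambda_1\cup\Lambda_2\cup\Lambda_3). \]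
   Context: For a finite connected graph $H=(V,E)$ with $|V|\ge2$ and distance matrix $D$ (graph distance), $\mathrm{QEC}(H)=\max\{\langle f,Df\rangle : f\in\mathbb{R}^V,\ \langle f,f\rangle=1,\ \langle\mathbf 1,f\rangle=0\}$, with $\mathbf 1$ the all-ones vector. $\bar K_m$ is the graph on $m$ vertices with no edges. The join $G_1+G_2$ of disjoint graphs has vertex set $V_1\cup V_2$ and edge set $E_1\cup E_2\cup\{\{x,y\}:x\in V_1,y\in V_2\}$. $J$ is the $n\times n$ all-ones matrix, $I$ the identity, $\mathrm{ev}(A)$ the set of eigenvalues of $A$. *)

theory Defs
  imports "HOL-Analysis.Analysis"
begin

definition graph_dist :: "('v \<Rightarrow> 'v \<Rightarrow> bool) \<Rightarrow> 'v \<Rightarrow> 'v \<Rightarrow> nat" where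
  "graph_dist E x y = (LEAST k. (E ^^ k) x y)"

definition QEC :: "('v::finite \<Rightarrow> 'v \<Rightarrow> bool) \<Rightarrow> real" where
  "QEC E = Sup {(\<Sum>x\<in>UNIV. \<Sum>y\<in>UNIV. real (graph_dist E x y) * f x * f y) | f :: 'v \<Rightarrow> real.
                 (\<Sum>x\<in>UNIV. f x * f x) = 1 \<and> (\<Sum>x\<in>UNIV. f x) = 0}"

definition join_empty :: "('n \<Rightarrow> 'n \<Rightarrow> bool) \<Rightarrow> ('m + 'n) \<Rightarrow> ('m + 'n) \<Rightarrow> bool" where
  "join_empty E u v = (case (u, v) of
      (Inl _, Inl _) \<Rightarrow> False
    | (Inr a, Inr b) \<Rightarrow> E a b
    | _ \<Rightarrow> True)"

definition complete_graph :: "('v \<Rightarrow> 'v \<Rightarrow> bool) \<Rightarrow> bool" where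
  "complete_graph E \<longleftrightarrow> (\<forall>x y. x \<noteq> y \<longrightarrow> E x y)"

definition adj_matrix :: "('n::finite \<Rightarrow> 'n \<Rightarrow> bool) \<Rightarrow> real^'n^'n" where
  "adj_matrix E = (\<chi> i j. if E i j then 1 else 0)"

definition all_ones_matrix :: "real^'n::finite^'n" where
  "all_ones_matrix = (\<chi> i j. 1)"

definition all_ones_vec :: "real^'n::finite" where
  "all_ones_vec = (\<chi> i. 1)"

definition ev :: "real^'n::finite^'n \<Rightarrow> real set" where
  "ev M = {\<alpha>. \<exists>v. v \<noteq> 0 \<and> M *v v = \<alpha> *\<^sub>R v}"

end

theory Submission
  imports Defs
begin

(* Every two vertices of the join H of the empty graph on m vertices with G have a common
   neighbour, so H has diameter at most two and its distance matrix is 2 (J - I) - A_H.  On unit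
   vectors orthogonal to the ones vector the distance form is therefore -2 - <f, A_H f>, and
   QEC(H) = -2 - mu with mu the minimum of the Rayleigh quotient of A_H on that complement.
   A minimiser f satisfies the Lagrange condition A_H f = mu f + c 1.  A path x - z - y with x, y
   non-adjacent gives a test vector of quotient -4/3, so mu < -1; in particular mu /= 0, and the
   Lagrange condition on the empty part forces f to be constant there, say k.  Writing g for the
   restriction of f to G, the condition becomes A g = mu g + beta 1 with (mu + 2m) <1, g> = m beta.
   Distinguishing whether mu is an eigenvalue of A, and whether beta or <1, g> vanishes, puts mu
   into one of Lambda_0, ..., Lambda_3; conversely every element of these sets arises from such a
   vector, so it is at least mu. *)

section \<open>Eigenvalues of real matrices\<close>

lemma matrix_vector_mult_minus_scaleR_mat:
  fixes M :: "real^'k::finite^'k"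
  shows "(M - a *\<^sub>R mat 1) *v x = M *v x - a *\<^sub>R x"
  by (simp add: matrix_vector_mult_diff_rdistrib flip: scaleR_matrix_vector_assoc)

lemma eigenvectors_scalars_zero:
  fixes M :: "real^'k::finite^'k" and v :: "real \<Rightarrow> real^'k"
  assumes "finite S"
    and "\<And>a. a \<in> S \<Longrightarrow> v a \<noteq> 0 \<and> M *v v a = a *\<^sub>R v a"
    and "(\<Sum>a\<in>S. c a *\<^sub>R v a) = 0" and "b \<in> S"
  shows "c b = 0"
  using assms
proof (induction S arbitrary: c b rule: finite_induct)
  case empty
  then show ?case by simp
next
  case (insert b' S)
  note eigvec = insert.prems(1)
  have shift: "(M - b' *\<^sub>R mat 1) *v v a = (a - b') *\<^sub>R v a" if "a \<in> insert b' S" for a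
    using eigvec that by (simp add: matrix_vector_mult_minus_scaleR_mat scaleR_diff_left)
  have "0 = (M - b' *\<^sub>R mat 1) *v (\<Sum>a\<in>insert b' S. c a *\<^sub>R v a)"
    using insert.prems(2) by simp
  also have "\<dots> = (\<Sum>a\<in>insert b' S. c a *\<^sub>R ((M - b' *\<^sub>R mat 1) *v v a))"
    by (simp only: linear_sum[OF matrix_vector_mul_linear] o_def matrix_vector_mult_scaleR)
  also have "\<dots> = (\<Sum>a\<in>S. (c a * (a - b')) *\<^sub>R v a)"
    using insert.hyps shift by simp
  finally have "c a * (a - b') = 0" if "a \<in> S" for a
    using insert.IH[of "\<lambda>a. c a * (a - b')"] eigvec that by simp
  with insert.hyps have cS: "c a = 0" if "a \<in> S" for a
    using that by force
  with insert.prems(2) insert.hyps have "c b' *\<^sub>R v b' = 0"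
    by simp
  with cS eigvec insert.prems(3) show ?case
    by auto
qed

lemma finite_ev: "finite (ev (M :: real^'k::finite^'k))"
proof (rule ccontr)
  assume "infinite (ev M)"
  then obtain S where S: "S \<subseteq> ev M" "finite S" "card S = Suc CARD('k)"
    using infinite_arbitrarily_large by blast
  have "\<forall>a\<in>ev M. \<exists>w. w \<noteq> 0 \<and> M *v w = a *\<^sub>R w"
    by (simp add: ev_def)
  from bchoice[OF this] obtain v where v: "\<forall>a\<in>ev M. v a \<noteq> 0 \<and> M *v v a = a *\<^sub>R v a"
    by blast
  have "inj_on v S"
  proof
    fix a b assume "a \<in> S" "b \<in> S" "v a = v b"
    with v S(1) have "a *\<^sub>R v a = b *\<^sub>R v a" and "v a \<noteq> 0"
      by (metis subsetD)+
    then show "a = b" by simp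
  qed
  have "independent (v ` S)"
  proof (rule independent_if_scalars_zero)
    show "finite (v ` S)" using S by simp
    fix f x assume "(\<Sum>x\<in>v ` S. f x *\<^sub>R x) = 0" "x \<in> v ` S"
    with \<open>inj_on v S\<close> S v show "f x = 0"
      using eigenvectors_scalars_zero[of S v M "f \<circ> v"] by (auto simp: sum.reindex subset_iff)
  qed
  then have "card (v ` S) \<le> CARD('k)"
    using independent_bound by fastforce
  with \<open>inj_on v S\<close> S(3) show False
    by (simp add: card_image)
qed

lemma matrix_vector_mult_matrix_inv:
  fixes M :: "real^'k::finite^'k"
  assumes "\<And>x. M *v x = 0 \<Longrightarrow> x = 0"
  shows "M *v (matrix_inv M *v y) = y"
proof -
  have "invertible M"
    using assms matrix_left_invertible_ker invertible_left_inverse by blast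
  then have "M ** matrix_inv M = mat 1"
    unfolding invertible_def matrix_inv_def by (rule someI2_ex) auto
  then show ?thesis
    by (simp add: matrix_vector_mul_assoc)
qed

lemma shifted_matrix_injective_if_not_ev:
  fixes A :: "real^'k::finite^'k"
  assumes "a \<notin> ev A" and "(A - a *\<^sub>R mat 1) *v x = 0"
  shows "x = 0"
  using assms by (auto simp: ev_def matrix_vector_mult_minus_scaleR_mat)

lemma shifted_matrix_inv_mult:
  fixes A :: "real^'k::finite^'k" and y :: "real^'k"
  assumes "a \<notin> ev A"
  shows "A *v (matrix_inv (A - a *\<^sub>R mat 1) *v y) = a *\<^sub>R (matrix_inv (A - a *\<^sub>R mat 1) *v y) + y"
proof -
  have "(A - a *\<^sub>R mat 1) *v (matrix_inv (A - a *\<^sub>R mat 1) *v y) = y"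
    by (rule matrix_vector_mult_matrix_inv) (rule shifted_matrix_injective_if_not_ev[OF assms])
  then show ?thesis
    by (simp add: matrix_vector_mult_minus_scaleR_mat diff_eq_eq add.commute)
qed

lemma inner_matrix_vector_mult_symmetric:
  fixes M :: "real^'k::finite^'k"
  assumes "transpose M = M"
  shows "x \<bullet> (M *v y) = (M *v x) \<bullet> y"
  by (metis assms dot_lmul_matrix vector_transpose_matrix)

section \<open>The Rayleigh quotient on the complement of the ones vector\<close>

lemma all_ones_vec_nth [simp]: "all_ones_vec $ i = 1"
  by (simp add: all_ones_vec_def)

lemma all_ones_vec_nonzero: "(all_ones_vec :: real^'k::finite) \<noteq> 0"
  by (simp add: all_ones_vec_def vec_eq_iff)

lemma inner_all_ones: "all_ones_vec \<bullet> (x :: real^'k::finite) = (\<Sum>i\<in>UNIV. x $ i)"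
  by (simp add: all_ones_vec_def inner_vec_def)

lemma inner_all_ones_self: "all_ones_vec \<bullet> (all_ones_vec :: real^'k::finite) = real CARD('k)"
  by (simp add: all_ones_vec_def inner_vec_def)

lemma all_ones_matrix_mult: "all_ones_matrix *v x = (all_ones_vec \<bullet> x) *\<^sub>R (all_ones_vec :: real^'k::finite)"
  by (simp add: vec_eq_iff matrix_vector_mult_def all_ones_matrix_def all_ones_vec_def inner_vec_def)

(* Eigenvalues of M compressed to the orthogonal complement of the ones vector; c is the Lagrange
   multiplier of the constraint <1, f> = 0. *)
definition ones_perp_ev :: "real^'v::finite^'v \<Rightarrow> real set" where
  "ones_perp_ev M = {\<alpha>. \<exists>f c. f \<noteq> 0 \<and> all_ones_vec \<bullet> f = 0 \<and> M *v f = \<alpha> *\<^sub>R f + c *\<^sub>R all_ones_vec}"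

definition ones_perp_minimizer :: "real^'v::finite^'v \<Rightarrow> real^'v \<Rightarrow> bool" where
  "ones_perp_minimizer M f0 \<longleftrightarrow> f0 \<bullet> f0 = 1 \<and> all_ones_vec \<bullet> f0 = 0 \<and>
     (\<forall>f. f \<bullet> f = 1 \<and> all_ones_vec \<bullet> f = 0 \<longrightarrow> f0 \<bullet> (M *v f0) \<le> f \<bullet> (M *v f))"

lemma ones_perp_ev_subset_ev:
  fixes M :: "real^'v::finite^'v"
  shows "ones_perp_ev M \<subseteq> ev ((mat 1 - (1 / real CARD('v)) *\<^sub>R all_ones_matrix) ** M)"
proof
  fix \<alpha> assume "\<alpha> \<in> ones_perp_ev M"
  then obtain f c where f: "f \<noteq> 0" "all_ones_vec \<bullet> f = 0" "M *v f = \<alpha> *\<^sub>R f + c *\<^sub>R all_ones_vec"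
    unfolding ones_perp_ev_def by blast
  have "((mat 1 - (1 / real CARD('v)) *\<^sub>R all_ones_matrix) ** M) *v f = \<alpha> *\<^sub>R f"
    using f(2,3)
    by (simp add: matrix_vector_mul_assoc[symmetric] matrix_vector_mult_diff_rdistrib all_ones_matrix_mult
        inner_add_right inner_all_ones_self flip: scaleR_matrix_vector_assoc)
  with f(1) show "\<alpha> \<in> ev ((mat 1 - (1 / real CARD('v)) *\<^sub>R all_ones_matrix) ** M)"
    unfolding ev_def by blast
qed

lemma finite_ones_perp_ev: "finite (ones_perp_ev M)"
  using finite_subset[OF ones_perp_ev_subset_ev finite_ev] .

lemma ones_perp_minimizer_exists:
  fixes M :: "real^'v::finite^'v" and x y :: 'v
  assumes "x \<noteq> y"
  obtains f0 where "ones_perp_minimizer M f0"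
proof -
  define K where "K = {f :: real^'v. f \<bullet> f = 1 \<and> all_ones_vec \<bullet> f = 0}"
  have "K = sphere 0 1 \<inter> {f. all_ones_vec \<bullet> f = 0}"
    unfolding K_def by (auto simp: norm_eq_1)
  then have "compact K"
    by (simp add: compact_Int_closed closed_hyperplane)
  define g :: "real^'v" where "g = axis x 1 - axis y 1"
  have "g \<bullet> g = 2"
    using assms by (simp add: g_def inner_diff_left inner_diff_right inner_axis_axis)
  moreover have "all_ones_vec \<bullet> g = 0"
    by (simp add: g_def inner_diff_right inner_axis all_ones_vec_def)
  ultimately have "(1 / sqrt 2) *\<^sub>R g \<in> K"
    by (simp add: K_def)
  then have "K \<noteq> {}" by blast
  have "continuous_on K (\<lambda>f. f \<bullet> (M *v f))"
    by (intro continuous_intros)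
  from continuous_attains_inf[OF \<open>compact K\<close> \<open>K \<noteq> {}\<close> this]
  obtain f0 where "f0 \<in> K" "\<And>f. f \<in> K \<Longrightarrow> f0 \<bullet> (M *v f0) \<le> f \<bullet> (M *v f)"
    by blast
  then have "ones_perp_minimizer M f0"
    unfolding ones_perp_minimizer_def K_def by blast
  then show thesis ..
qed

lemma ones_perp_minimizer_le:
  assumes "ones_perp_minimizer M f0" and "all_ones_vec \<bullet> g = 0"
  shows "(f0 \<bullet> (M *v f0)) * (g \<bullet> g) \<le> g \<bullet> (M *v g)"
proof (cases "g = 0")
  case False
  define u where "u = (1 / norm g) *\<^sub>R g"
  have "u \<bullet> u = 1" "all_ones_vec \<bullet> u = 0"
    using False assms(2) by (simp_all add: u_def power2_norm_eq_inner[symmetric] power2_eq_square)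
  with assms(1) have "f0 \<bullet> (M *v f0) \<le> u \<bullet> (M *v u)"
    unfolding ones_perp_minimizer_def by blast
  also have "\<dots> = (g \<bullet> (M *v g)) / (g \<bullet> g)"
    by (simp add: u_def matrix_vector_mult_scaleR power2_norm_eq_inner[symmetric] power2_eq_square)
  finally show ?thesis
    using False by (simp add: pos_le_divide_eq)
qed simp

lemma linear_coeff_zero_if_quadratic_nonneg:
  fixes b c :: real
  assumes "\<And>t. 0 \<le> 2 * t * b + t * t * c"
  shows "b = 0"
proof (rule ccontr)
  assume "b \<noteq> 0"
  define d where "d = \<bar>c\<bar> + 1"
  have "d > 0" unfolding d_def by simp
  have "0 \<le> (2 * (- b / d) * b + (- b / d) * (- b / d) * c) * (d * d)"
    using assms[of "- b / d"] by simp
  also have "\<dots> = b * b * (c - 2 * d)"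
    using \<open>d > 0\<close> by (simp add: field_simps)
  also have "\<dots> < 0"
  proof (rule mult_pos_neg)
    show "0 < b * b"
      using \<open>b \<noteq> 0\<close> by (metis power2_eq_square zero_less_power2)
  qed (simp add: d_def)
  finally show False by simp
qed

lemma ones_perp_minimizer_stationary:
  fixes M :: "real^'v::finite^'v"
  assumes sym: "transpose M = M" and min: "ones_perp_minimizer M f0"
    and h: "all_ones_vec \<bullet> h = 0"
  shows "h \<bullet> (M *v f0 - (f0 \<bullet> (M *v f0)) *\<^sub>R f0) = 0"
proof (rule linear_coeff_zero_if_quadratic_nonneg)
  fix t
  define \<mu> where "\<mu> = f0 \<bullet> (M *v f0)"
  have f0: "f0 \<bullet> f0 = 1" "all_ones_vec \<bullet> f0 = 0"
    using min unfolding ones_perp_minimizer_def by auto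
  then have "all_ones_vec \<bullet> (f0 + t *\<^sub>R h) = 0"
    using h by (simp add: inner_add_right)
  from ones_perp_minimizer_le[OF min this]
  have "\<mu> * ((f0 + t *\<^sub>R h) \<bullet> (f0 + t *\<^sub>R h)) \<le> (f0 + t *\<^sub>R h) \<bullet> (M *v (f0 + t *\<^sub>R h))"
    by (simp only: \<mu>_def)
  moreover have "f0 \<bullet> (M *v h) = h \<bullet> (M *v f0)"
    using inner_matrix_vector_mult_symmetric[OF sym] by (simp add: inner_commute)
  ultimately show "0 \<le> 2 * t * (h \<bullet> (M *v f0 - (f0 \<bullet> (M *v f0)) *\<^sub>R f0))
      + t * t * (h \<bullet> (M *v h) - \<mu> * (h \<bullet> h))"
    using f0 by (simp add: \<mu>_def algebra_simps inner_add_left inner_add_right inner_commute)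
qed

lemma eq_scaleR_all_ones_if_orthogonal:
  fixes w :: "real^'v::finite"
  assumes "\<And>h. all_ones_vec \<bullet> h = 0 \<Longrightarrow> h \<bullet> w = 0"
  shows "w = ((all_ones_vec \<bullet> w) / real CARD('v)) *\<^sub>R all_ones_vec"
proof -
  define h where "h = w - ((all_ones_vec \<bullet> w) / real CARD('v)) *\<^sub>R all_ones_vec"
  have h_perp: "all_ones_vec \<bullet> h = 0"
    by (simp add: h_def inner_diff_right inner_all_ones_self)
  have "h \<bullet> h = h \<bullet> w - ((all_ones_vec \<bullet> w) / real CARD('v)) * (h \<bullet> all_ones_vec)"
    by (simp add: h_def inner_diff_right)
  also have "\<dots> = 0"
    using assms[OF h_perp] h_perp by (simp add: inner_commute)
  finally show ?thesis
    by (simp add: h_def)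
qed

lemma ones_perp_minimizer_in_ones_perp_ev:
  fixes M :: "real^'v::finite^'v"
  assumes sym: "transpose M = M" and min: "ones_perp_minimizer M f0"
  shows "f0 \<bullet> (M *v f0) \<in> ones_perp_ev M"
proof -
  define w where "w = M *v f0 - (f0 \<bullet> (M *v f0)) *\<^sub>R f0"
  have "w = ((all_ones_vec \<bullet> w) / real CARD('v)) *\<^sub>R all_ones_vec"
    using ones_perp_minimizer_stationary[OF sym min] unfolding w_def
    by (rule eq_scaleR_all_ones_if_orthogonal)
  then have "M *v f0 = (f0 \<bullet> (M *v f0)) *\<^sub>R f0 + ((all_ones_vec \<bullet> w) / real CARD('v)) *\<^sub>R all_ones_vec"
    by (simp add: w_def diff_eq_eq add.commute)
  moreover have "f0 \<noteq> 0" "all_ones_vec \<bullet> f0 = 0"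
    using min unfolding ones_perp_minimizer_def by auto
  ultimately show ?thesis
    unfolding ones_perp_ev_def by blast
qed

lemma ones_perp_minimizer_le_ones_perp_ev:
  assumes "ones_perp_minimizer M f0" and "\<alpha> \<in> ones_perp_ev M"
  shows "f0 \<bullet> (M *v f0) \<le> \<alpha>"
proof -
  obtain f c where f: "f \<noteq> 0" "all_ones_vec \<bullet> f = 0" "M *v f = \<alpha> *\<^sub>R f + c *\<^sub>R all_ones_vec"
    using assms(2) unfolding ones_perp_ev_def by blast
  have "(f0 \<bullet> (M *v f0)) * (f \<bullet> f) \<le> f \<bullet> (M *v f)"
    using ones_perp_minimizer_le[OF assms(1) f(2)] .
  also have "\<dots> = \<alpha> * (f \<bullet> f)"
    using f(2,3) by (simp add: inner_add_right inner_commute)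
  finally show ?thesis
    using f(1) by simp
qed

section \<open>Graphs of diameter two\<close>

lemma graph_dist_if_common_neighbour:
  assumes common: "\<And>x y. x \<noteq> y \<Longrightarrow> \<not> H x y \<Longrightarrow> \<exists>z. H x z \<and> H z y"
  shows "graph_dist H x y = (if x = y then 0 else if H x y then 1 else 2)"
proof -
  have walk1: "(H ^^ 1) x y \<longleftrightarrow> H x y"
    by (simp only: relpowp_1)
  have walk2: "(H ^^ 2) x y \<longleftrightarrow> (\<exists>z. H x z \<and> H z y)"
    by (auto simp: numeral_2_eq_2 relcompp_apply)
  consider "x = y" | "x \<noteq> y" "H x y" | "x \<noteq> y" "\<not> H x y"
    by blast
  then show ?thesis
  proof cases
    case 2
    have "(LEAST k. (H ^^ k) x y) = 1"
    proof (rule Least_equality)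
      fix k assume "(H ^^ k) x y"
      with 2 show "1 \<le> k" by (cases k) auto
    qed (use 2 walk1 in simp)
    with 2 show ?thesis
      unfolding graph_dist_def by simp
  next
    case 3
    have "(LEAST k. (H ^^ k) x y) = 2"
    proof (rule Least_equality)
      show "(H ^^ 2) x y"
        using 3 common walk2 by blast
      fix k assume walk: "(H ^^ k) x y"
      have "k \<noteq> 0"
        using 3 walk by (cases k) auto
      moreover have "k \<noteq> 1"
        using 3 walk walk1 by metis
      ultimately show "2 \<le> k" by simp
    qed
    with 3 show ?thesis
      unfolding graph_dist_def by simp
  qed (simp add: graph_dist_def)
qed

lemma inner_adj_matrix:
  "vec_lambda f \<bullet> (adj_matrix H *v vec_lambda f) =
     (\<Sum>x\<in>UNIV. \<Sum>y\<in>UNIV. (if H x y then 1 else 0) * f x * f (y :: 'v::finite))"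
  by (simp add: inner_vec_def matrix_vector_mult_def adj_matrix_def sum_distrib_left mult_ac)

lemma distance_form_if_common_neighbour:
  fixes H :: "'v::finite \<Rightarrow> 'v \<Rightarrow> bool" and f :: "'v \<Rightarrow> real"
  assumes irrefl: "\<And>x. \<not> H x x"
    and common: "\<And>x y. x \<noteq> y \<Longrightarrow> \<not> H x y \<Longrightarrow> \<exists>z. H x z \<and> H z y"
  shows "(\<Sum>x\<in>UNIV. \<Sum>y\<in>UNIV. real (graph_dist H x y) * f x * f y) =
    2 * (\<Sum>x\<in>UNIV. f x)\<^sup>2 - 2 * (\<Sum>x\<in>UNIV. f x * f x) - vec_lambda f \<bullet> (adj_matrix H *v vec_lambda f)"
proof -
  have "(\<Sum>x\<in>UNIV. \<Sum>y\<in>UNIV. real (graph_dist H x y) * f x * f y) =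
      (\<Sum>x\<in>UNIV. \<Sum>y\<in>UNIV. 2 * (f x * f y) - 2 * (if x = y then f x * f y else 0)
        - (if H x y then 1 else 0) * f x * f y)"
    by (intro sum.cong refl) (auto simp: graph_dist_if_common_neighbour[OF common] irrefl)
  also have "\<dots> = 2 * (\<Sum>x\<in>UNIV. \<Sum>y\<in>UNIV. f x * f y)
      - 2 * (\<Sum>x\<in>UNIV. \<Sum>y\<in>UNIV. if x = y then f x * f y else 0)
      - (\<Sum>x\<in>UNIV. \<Sum>y\<in>UNIV. (if H x y then 1 else 0) * f x * f y)"
    by (simp only: sum_subtractf sum_distrib_left)
  also have "(\<Sum>x\<in>UNIV. \<Sum>y\<in>UNIV. if x = y then f x * f y else 0) = (\<Sum>x\<in>UNIV. f x * f x)"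
    by simp
  also have "(\<Sum>x\<in>UNIV. \<Sum>y\<in>UNIV. f x * f y) = (\<Sum>x\<in>UNIV. f x)\<^sup>2"
    by (simp add: power2_eq_square sum_product)
  also have "(\<Sum>x\<in>UNIV. \<Sum>y\<in>UNIV. (if H x y then 1 else 0) * f x * f y) =
      vec_lambda f \<bullet> (adj_matrix H *v vec_lambda f)"
    by (simp add: inner_adj_matrix)
  finally show ?thesis .
qed

lemma QEC_if_common_neighbour:
  fixes H :: "'v::finite \<Rightarrow> 'v \<Rightarrow> bool"
  assumes irrefl: "\<And>x. \<not> H x x"
    and common: "\<And>x y. x \<noteq> y \<Longrightarrow> \<not> H x y \<Longrightarrow> \<exists>z. H x z \<and> H z y"
    and min: "ones_perp_minimizer (adj_matrix H) f0"
  shows "QEC H = - 2 - f0 \<bullet> (adj_matrix H *v f0)"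
proof -
  let ?Q = "\<lambda>f. \<Sum>x\<in>UNIV. \<Sum>y\<in>UNIV. real (graph_dist H x y) * f x * f y"
  have Q: "?Q f = - 2 - vec_lambda f \<bullet> (adj_matrix H *v vec_lambda f)"
    and unit: "vec_lambda f \<bullet> vec_lambda f = 1" and perp: "all_ones_vec \<bullet> vec_lambda f = 0"
    if "(\<Sum>x\<in>UNIV. f x * f x) = 1" "(\<Sum>x\<in>UNIV. f x) = 0" for f
    using that distance_form_if_common_neighbour[OF irrefl common, of f]
    by (simp_all add: inner_vec_def)
  have f0: "(\<Sum>x\<in>UNIV. f0 $ x * f0 $ x) = 1" "(\<Sum>x\<in>UNIV. f0 $ x) = 0"
    using min by (simp_all add: ones_perp_minimizer_def inner_vec_def)
  show ?thesis
    unfolding QEC_def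
  proof (rule cSup_eq_maximum)
    show "- 2 - f0 \<bullet> (adj_matrix H *v f0) \<in>
        {?Q f |f. (\<Sum>x\<in>UNIV. f x * f x) = 1 \<and> (\<Sum>x\<in>UNIV. f x) = 0}"
      using Q[OF f0] f0 by force
  next
    fix q assume "q \<in> {?Q f |f. (\<Sum>x\<in>UNIV. f x * f x) = 1 \<and> (\<Sum>x\<in>UNIV. f x) = 0}"
    then obtain f where f: "(\<Sum>x\<in>UNIV. f x * f x) = 1" "(\<Sum>x\<in>UNIV. f x) = 0" and "q = ?Q f"
      by blast
    with min Q[OF f] unit[OF f] perp[OF f] show "q \<le> - 2 - f0 \<bullet> (adj_matrix H *v f0)"
      unfolding ones_perp_minimizer_def by auto
  qed
qed

lemma transpose_adj_matrix:
  assumes "\<And>x y. H x y \<Longrightarrow> H y x"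
  shows "transpose (adj_matrix H) = adj_matrix (H :: 'v::finite \<Rightarrow> _)"
  using assms by (auto simp: vec_eq_iff transpose_def adj_matrix_def)

lemma inner_adj_matrix_axis:
  "axis x 1 \<bullet> (adj_matrix H *v axis y 1) = (if H x y then 1 else (0::real))"
  by (simp add: matrix_vector_mult_basis column_def inner_axis' adj_matrix_def)

lemma ones_perp_minimizer_lt_neg_one:
  fixes H :: "'v::finite \<Rightarrow> 'v \<Rightarrow> bool"
  assumes sym: "\<And>x y. H x y \<Longrightarrow> H y x" and irrefl: "\<And>x. \<not> H x x"
    and "x \<noteq> y" "\<not> H x y" "H x z" "H z y"
    and min: "ones_perp_minimizer (adj_matrix H) f0"
  shows "f0 \<bullet> (adj_matrix H *v f0) < -1"
proof -
  define F :: "real^'v" where "F = axis x 1 + axis y 1 - 2 *\<^sub>R axis z 1"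
  have z: "z \<noteq> x" "z \<noteq> y" "H z x" "H y z" "\<not> H y x"
    using assms(3-6) sym irrefl by metis+
  have "all_ones_vec \<bullet> F = 0"
    by (simp add: F_def inner_add_right inner_diff_right inner_axis all_ones_vec_def)
  then have "(f0 \<bullet> (adj_matrix H *v f0)) * (F \<bullet> F) \<le> F \<bullet> (adj_matrix H *v F)"
    by (rule ones_perp_minimizer_le[OF min])
  moreover have "F \<bullet> F = 6"
    using assms(3) z by (simp add: F_def inner_add_left inner_add_right inner_diff_left inner_diff_right
        inner_axis_axis)
  moreover have "F \<bullet> (adj_matrix H *v F) = -8"
    using assms(4) z irrefl sym
    by (simp add: F_def inner_add_left inner_add_right inner_diff_left inner_diff_right
        matrix_vector_right_distrib matrix_vector_mult_diff_distrib matrix_vector_mult_scaleR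
        inner_adj_matrix_axis)
  ultimately show ?thesis
    by simp
qed

section \<open>The join with an empty graph\<close>

lemma join_empty_sym:
  assumes "\<And>x y. E x y \<Longrightarrow> E y x"
  shows "join_empty E u v \<Longrightarrow> join_empty E v u"
  using assms by (auto simp: join_empty_def split: sum.splits)

lemma join_empty_irrefl:
  assumes "\<And>x. \<not> E x x"
  shows "\<not> join_empty E u u"
  using assms by (cases u) (auto simp: join_empty_def)

lemma join_empty_common_neighbour:
  fixes u v :: "'m + 'n"
  assumes "\<not> join_empty E u v"
  shows "\<exists>w. join_empty E u w \<and> join_empty E w v"
proof (cases u)
  case (Inl a)
  with assms show ?thesis
    by (intro exI[of _ "Inr undefined"]) (auto simp: join_empty_def split: sum.splits)
next
  case (Inr a)
  with assms show ?thesis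
    by (intro exI[of _ "Inl undefined"]) (auto simp: join_empty_def split: sum.splits)
qed

lemma sum_UNIV_Plus:
  "(\<Sum>z\<in>UNIV. g z) = (\<Sum>x\<in>UNIV. g (Inl x)) + (\<Sum>a\<in>UNIV. g (Inr a :: 'm::finite + 'n::finite))"
  using sum.Plus[of "UNIV :: 'm set" "UNIV :: 'n set" g] by (simp add: o_def)

definition join_vec :: "real \<Rightarrow> real^'n::finite \<Rightarrow> real^('m::finite + 'n)" where
  "join_vec k g = (\<chi> z. case z of Inl _ \<Rightarrow> k | Inr a \<Rightarrow> g $ a)"

lemma join_vec_eq_iff: "join_vec k g = join_vec k' g' \<longleftrightarrow> k = k' \<and> g = g'"
proof
  assume eq: "join_vec k g = join_vec k' g'"
  have "k = k'"
    using arg_cong[OF eq, of "\<lambda>F. F $ Inl undefined"] by (simp add: join_vec_def)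
  moreover have "g $ a = g' $ a" for a
    using arg_cong[OF eq, of "\<lambda>F. F $ Inr a"] by (simp add: join_vec_def)
  ultimately show "k = k' \<and> g = g'"
    by (simp add: vec_eq_iff)
qed simp

lemma join_vec_eq_0_iff: "join_vec k g = (0 :: real^('m::finite + 'n::finite)) \<longleftrightarrow> k = 0 \<and> g = 0"
proof -
  have "join_vec 0 0 = (0 :: real^('m + 'n))"
    by (simp add: join_vec_def vec_eq_iff split: sum.split)
  then have "join_vec k g = (0 :: real^('m + 'n)) \<longleftrightarrow> join_vec k g = (join_vec 0 0 :: real^('m + 'n))"
    by simp
  also have "\<dots> \<longleftrightarrow> k = 0 \<and> g = 0"
    by (rule join_vec_eq_iff)
  finally show ?thesis .
qed

lemma join_vec_add: "join_vec k g + join_vec k' g' = join_vec (k + k') (g + g')"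
  by (simp add: join_vec_def vec_eq_iff split: sum.split)

lemma join_vec_scaleR: "c *\<^sub>R join_vec k g = join_vec (c * k) (c *\<^sub>R g)"
  by (simp add: join_vec_def vec_eq_iff split: sum.split)

lemma all_ones_vec_eq_join_vec: "all_ones_vec = join_vec 1 all_ones_vec"
  by (simp add: join_vec_def all_ones_vec_def vec_eq_iff split: sum.split)

lemma eq_join_vec:
  fixes F :: "real^('m::finite + 'n::finite)"
  assumes "\<And>x. F $ Inl x = k"
  shows "F = join_vec k (\<chi> a. F $ Inr a)"
  using assms by (simp add: join_vec_def vec_eq_iff split: sum.split)

lemma inner_all_ones_join_vec:
  "all_ones_vec \<bullet> (join_vec k g :: real^('m::finite + 'n::finite)) = real CARD('m) * k + all_ones_vec \<bullet> g"
  by (simp add: inner_all_ones join_vec_def sum_UNIV_Plus)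

lemma adj_join_mult_Inl:
  fixes F :: "real^('m::finite + 'n::finite)"
  shows "(adj_matrix (join_empty E) *v F) $ Inl x = (\<Sum>a\<in>UNIV. F $ Inr a)"
  by (simp add: matrix_vector_mult_def adj_matrix_def join_empty_def sum_UNIV_Plus)

lemma adj_join_mult_join_vec:
  "adj_matrix (join_empty E) *v (join_vec k g :: real^('m::finite + 'n::finite)) =
     join_vec (all_ones_vec \<bullet> g) (adj_matrix E *v g + (real CARD('m) * k) *\<^sub>R all_ones_vec)"
  by (simp add: vec_eq_iff join_vec_def matrix_vector_mult_def adj_matrix_def join_empty_def
      sum_UNIV_Plus inner_all_ones split: sum.split)

lemma join_vec_if_adj_join_eigen:
  fixes F :: "real^('m::finite + 'n::finite)"
  assumes eigen: "adj_matrix (join_empty E) *v F = \<alpha> *\<^sub>R F + c *\<^sub>R all_ones_vec" and "\<alpha> \<noteq> 0"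
  shows "F = join_vec (((\<Sum>a\<in>UNIV. F $ Inr a) - c) / \<alpha>) (\<chi> a. F $ Inr a)"
proof (rule eq_join_vec)
  fix x
  have "(\<Sum>a\<in>UNIV. F $ Inr a) = \<alpha> * F $ Inl x + c"
    using arg_cong[OF eigen, of "\<lambda>F. F $ Inl x"] by (simp add: adj_join_mult_Inl)
  with \<open>\<alpha> \<noteq> 0\<close> show "F $ Inl x = ((\<Sum>a\<in>UNIV. F $ Inr a) - c) / \<alpha>"
    by simp
qed

(* For alpha /= 0 an f as in ones_perp_ev for the join is constant, k say, on the empty part
   (join_vec_if_adj_join_eigen).  With g its restriction to G, <1, f> = 0 gives m k = -<1, g>, and
   the Lagrange condition becomes the pair of equations below with beta = c - m k. *)
definition reduced_join_ev :: "nat \<Rightarrow> real^'n::finite^'n \<Rightarrow> real set" where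
  "reduced_join_ev m A = {\<alpha>. \<exists>g \<beta>. g \<noteq> 0 \<and> A *v g = \<alpha> *\<^sub>R g + \<beta> *\<^sub>R all_ones_vec \<and>
     (\<alpha> + 2 * real m) * (all_ones_vec \<bullet> g) = real m * \<beta>}"

lemma reduced_join_ev_subset_ones_perp_ev:
  "reduced_join_ev CARD('m) (adj_matrix E) \<subseteq>
     ones_perp_ev (adj_matrix (join_empty E :: ('m::finite + 'n::finite) \<Rightarrow> _))"
proof
  fix \<alpha> assume "\<alpha> \<in> reduced_join_ev CARD('m) (adj_matrix E)"
  then obtain g \<beta> where g: "g \<noteq> 0" "adj_matrix E *v g = \<alpha> *\<^sub>R g + \<beta> *\<^sub>R all_ones_vec"
    and secular: "(\<alpha> + 2 * real CARD('m)) * (all_ones_vec \<bullet> g) = real CARD('m) * \<beta>"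
    unfolding reduced_join_ev_def by blast
  define s where "s = all_ones_vec \<bullet> g"
  define k where "k = - s / real CARD('m)"
  define F :: "real^('m + 'n)" where "F = join_vec k g"
  have mk: "real CARD('m) * k = - s"
    by (simp add: k_def)
  have \<alpha>k: "\<alpha> * k = 2 * s - \<beta>"
    using secular by (simp add: k_def s_def field_simps)
  have "F \<noteq> 0"
    using g(1) by (simp add: F_def join_vec_eq_0_iff)
  moreover have "all_ones_vec \<bullet> F = 0"
    by (simp add: F_def inner_all_ones_join_vec mk s_def)
  moreover have "adj_matrix E *v g + (real CARD('m) * k) *\<^sub>R all_ones_vec =
      \<alpha> *\<^sub>R g + (\<beta> - s) *\<^sub>R all_ones_vec"
    by (simp add: g(2) mk scaleR_diff_left)
  with \<alpha>k have "adj_matrix (join_empty E) *v F = \<alpha> *\<^sub>R F + (\<beta> - s) *\<^sub>R all_ones_vec"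
    by (subst all_ones_vec_eq_join_vec)
      (simp add: F_def adj_join_mult_join_vec join_vec_scaleR join_vec_add join_vec_eq_iff
        s_def[symmetric])
  ultimately show "\<alpha> \<in> ones_perp_ev (adj_matrix (join_empty E :: ('m + 'n) \<Rightarrow> _))"
    unfolding ones_perp_ev_def by blast
qed

lemma reduced_join_ev_if_ones_perp_ev:
  assumes "\<alpha> \<in> ones_perp_ev (adj_matrix (join_empty E :: ('m::finite + 'n::finite) \<Rightarrow> _))"
    and "\<alpha> \<noteq> 0"
  shows "\<alpha> \<in> reduced_join_ev CARD('m) (adj_matrix E)"
proof -
  obtain F :: "real^('m + 'n)" and c where F: "F \<noteq> 0" "all_ones_vec \<bullet> F = 0"
    and eigen: "adj_matrix (join_empty E) *v F = \<alpha> *\<^sub>R F + c *\<^sub>R all_ones_vec"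
    using assms(1) unfolding ones_perp_ev_def by blast
  define g where "g = (\<chi> a. F $ Inr a)"
  define k where "k = ((\<Sum>a\<in>UNIV. F $ Inr a) - c) / \<alpha>"
  have F_eq: "F = join_vec k g"
    unfolding k_def g_def by (rule join_vec_if_adj_join_eigen[OF eigen assms(2)])
  define s where "s = all_ones_vec \<bullet> g"
  have mk: "real CARD('m) * k = - s"
    using F(2) by (simp add: F_eq inner_all_ones_join_vec s_def)
  have "(join_vec s (adj_matrix E *v g + (real CARD('m) * k) *\<^sub>R all_ones_vec) :: real^('m + 'n)) =
      join_vec (\<alpha> * k + c) (\<alpha> *\<^sub>R g + c *\<^sub>R all_ones_vec)"
    using eigen
    by (subst (asm) all_ones_vec_eq_join_vec)
      (simp add: F_eq adj_join_mult_join_vec join_vec_scaleR join_vec_add s_def)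
  then have s: "s = \<alpha> * k + c"
    and "adj_matrix E *v g + (real CARD('m) * k) *\<^sub>R all_ones_vec = \<alpha> *\<^sub>R g + c *\<^sub>R all_ones_vec"
    by (simp_all only: join_vec_eq_iff)
  then have Ag: "adj_matrix E *v g = \<alpha> *\<^sub>R g + (c - real CARD('m) * k) *\<^sub>R all_ones_vec"
    by (simp add: scaleR_diff_left add_diff_eq eq_diff_eq)
  have "g \<noteq> 0"
  proof
    assume "g = 0"
    with mk have "k = 0"
      by (simp add: s_def)
    with \<open>g = 0\<close> F(1) show False
      by (simp add: F_eq join_vec_eq_0_iff)
  qed
  moreover have "(\<alpha> + 2 * real CARD('m)) * s = real CARD('m) * (c - real CARD('m) * k)"
  proof -
    have s_eq: "s = - real CARD('m) * k" and c_eq: "c = - real CARD('m) * k - \<alpha> * k"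
      using mk s by linarith+
    show ?thesis
      unfolding c_eq s_eq by algebra
  qed
  ultimately show ?thesis
    unfolding reduced_join_ev_def s_def using Ag by blast
qed

section \<open>The sets Lambda_0, ..., Lambda_3\<close>

definition join_Lambda :: "nat \<Rightarrow> real^'n::finite^'n \<Rightarrow> real set" where
  "join_Lambda m A =
     (if m \<ge> 2 \<and> real m \<in> ev (all_ones_matrix - A) then {- real m} else {}) \<union>
     {\<alpha>. \<alpha> \<notin> ev A \<union> {0, - real m, - 2 * real m} \<and>
        (\<alpha> + 2 * real m) * (all_ones_vec \<bullet> (matrix_inv (A - \<alpha> *\<^sub>R mat 1) *v all_ones_vec)) - real m = 0} \<union>
     (if - 2 * real m \<in> ev A then {- 2 * real m} else {}) \<union>
     {\<alpha>. \<alpha> \<in> ev A - {0, - real m, - 2 * real m} \<and>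
        (\<exists>g. A *v g = \<alpha> *\<^sub>R g \<and> g \<bullet> g = 1 \<and> all_ones_vec \<bullet> g = 0)}"

lemma reduced_join_ev_if_ev:
  assumes "g \<noteq> 0" "A *v g = \<alpha> *\<^sub>R g" "(\<alpha> + 2 * real m) * (all_ones_vec \<bullet> g) = 0"
  shows "\<alpha> \<in> reduced_join_ev m A"
  using assms unfolding reduced_join_ev_def by force

lemma reduced_join_ev_if_ones_minus_ev:
  assumes "real m \<in> ev (all_ones_matrix - A)"
  shows "- real m \<in> reduced_join_ev m A"
proof -
  obtain g where g: "g \<noteq> 0" "(all_ones_matrix - A) *v g = real m *\<^sub>R g"
    using assms unfolding ev_def by blast
  then have "A *v g = (- real m) *\<^sub>R g + (all_ones_vec \<bullet> g) *\<^sub>R all_ones_vec"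
    by (simp add: matrix_vector_mult_diff_rdistrib all_ones_matrix_mult algebra_simps)
  with g(1) show ?thesis
    unfolding reduced_join_ev_def by force
qed

lemma reduced_join_ev_if_secular:
  assumes "\<alpha> \<notin> ev A"
    and "(\<alpha> + 2 * real m) * (all_ones_vec \<bullet> (matrix_inv (A - \<alpha> *\<^sub>R mat 1) *v all_ones_vec)) = real m"
  shows "\<alpha> \<in> reduced_join_ev m A"
proof -
  define h where "h = matrix_inv (A - \<alpha> *\<^sub>R mat 1) *v all_ones_vec"
  have Ah: "A *v h = \<alpha> *\<^sub>R h + 1 *\<^sub>R all_ones_vec"
    using shifted_matrix_inv_mult[OF assms(1)] by (simp add: h_def)
  moreover have "h \<noteq> 0"
    using Ah all_ones_vec_nonzero by auto
  ultimately show ?thesis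
    using assms(2) unfolding reduced_join_ev_def h_def by force
qed

lemma join_Lambda_subset_reduced_join_ev: "join_Lambda m A \<subseteq> reduced_join_ev m A"
proof
  fix \<alpha> assume "\<alpha> \<in> join_Lambda m A"
  then consider "real m \<in> ev (all_ones_matrix - A)" "\<alpha> = - real m"
    | "\<alpha> \<notin> ev A"
        "(\<alpha> + 2 * real m) * (all_ones_vec \<bullet> (matrix_inv (A - \<alpha> *\<^sub>R mat 1) *v all_ones_vec)) = real m"
    | "- 2 * real m \<in> ev A" "\<alpha> = - 2 * real m"
    | g where "A *v g = \<alpha> *\<^sub>R g" "g \<bullet> g = 1" "all_ones_vec \<bullet> g = 0"
    unfolding join_Lambda_def by (auto split: if_splits)
  then show "\<alpha> \<in> reduced_join_ev m A"
  proof cases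
    case 3
    then show ?thesis
      unfolding ev_def using reduced_join_ev_if_ev[of _ A \<alpha> m] by auto
  next
    case (4 g)
    moreover have "g \<noteq> 0"
      using 4(2) by auto
    ultimately show ?thesis
      using reduced_join_ev_if_ev[of g A \<alpha> m] by simp
  qed (auto intro: reduced_join_ev_if_ones_minus_ev reduced_join_ev_if_secular)
qed

lemma unit_perp_eigenvector_if_reduced_join_ev:
  fixes A :: "real^'n::finite^'n"
  assumes sym: "transpose A = A" and "\<alpha> \<in> ev A"
    and g: "A *v g = \<alpha> *\<^sub>R g + \<beta> *\<^sub>R all_ones_vec"
    and secular: "(\<alpha> + 2 * real m) * (all_ones_vec \<bullet> g) = real m * \<beta>"
    and "g \<noteq> 0" "\<alpha> \<noteq> - 2 * real m"
  shows "\<exists>u. A *v u = \<alpha> *\<^sub>R u \<and> u \<bullet> u = 1 \<and> all_ones_vec \<bullet> u = 0"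
proof -
  obtain v where v: "v \<noteq> 0" "A *v v = \<alpha> *\<^sub>R v"
    using assms(2) unfolding ev_def by blast
  have "\<alpha> * (v \<bullet> g) + \<beta> * (v \<bullet> all_ones_vec) = \<alpha> * (v \<bullet> g)"
    using inner_matrix_vector_mult_symmetric[OF sym, of v g] by (simp add: g v(2) inner_add_right)
  then have \<beta>v: "\<beta> * (all_ones_vec \<bullet> v) = 0"
    by (simp add: inner_commute)
  obtain w where w: "w \<noteq> 0" "A *v w = \<alpha> *\<^sub>R w" "all_ones_vec \<bullet> w = 0"
  proof (cases "all_ones_vec \<bullet> v = 0")
    case True
    with v that show ?thesis by blast
  next
    case False
    with \<beta>v have "\<beta> = 0" by simp
    with secular assms(6) have "all_ones_vec \<bullet> g = 0" by simp
    with g \<open>\<beta> = 0\<close> \<open>g \<noteq> 0\<close> that show ?thesis by simp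
  qed
  define u where "u = (1 / norm w) *\<^sub>R w"
  have "A *v u = \<alpha> *\<^sub>R u" "u \<bullet> u = 1" "all_ones_vec \<bullet> u = 0"
    using w by (simp_all add: u_def matrix_vector_mult_scaleR power2_norm_eq_inner[symmetric] power2_eq_square)
  then show ?thesis by blast
qed

lemma secular_if_reduced_join_ev:
  fixes A :: "real^'n::finite^'n"
  assumes "\<alpha> \<notin> ev A"
    and g: "A *v g = \<alpha> *\<^sub>R g + \<beta> *\<^sub>R all_ones_vec" "g \<noteq> 0"
    and secular: "(\<alpha> + 2 * real m) * (all_ones_vec \<bullet> g) = real m * \<beta>"
  shows "(\<alpha> + 2 * real m) * (all_ones_vec \<bullet> (matrix_inv (A - \<alpha> *\<^sub>R mat 1) *v all_ones_vec)) = real m"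
proof -
  define h where "h = matrix_inv (A - \<alpha> *\<^sub>R mat 1) *v all_ones_vec"
  have Ah: "A *v h = \<alpha> *\<^sub>R h + all_ones_vec"
    unfolding h_def by (rule shifted_matrix_inv_mult[OF assms(1)])
  have "(A - \<alpha> *\<^sub>R mat 1) *v (g - \<beta> *\<^sub>R h) = (A *v g - \<alpha> *\<^sub>R g) - \<beta> *\<^sub>R (A *v h - \<alpha> *\<^sub>R h)"
    by (simp only: matrix_vector_mult_minus_scaleR_mat matrix_vector_mult_diff_distrib
        matrix_vector_mult_scaleR)
  also have "\<dots> = 0"
    by (simp add: g(1) Ah)
  finally have "(A - \<alpha> *\<^sub>R mat 1) *v (g - \<beta> *\<^sub>R h) = 0" .
  then have "g - \<beta> *\<^sub>R h = 0"
    by (rule shifted_matrix_injective_if_not_ev[OF assms(1)])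
  then have gh: "g = \<beta> *\<^sub>R h"
    by simp
  with g(2) have "\<beta> \<noteq> 0" by auto
  with secular show ?thesis
    by (simp add: gh h_def mult.left_commute)
qed

(* -1 is excluded only because Lambda_0 admits -m just for m >= 2. *)
lemma join_Lambda_if_reduced_join_ev:
  fixes A :: "real^'n::finite^'n"
  assumes sym: "transpose A = A" and "\<alpha> \<in> reduced_join_ev m A" and "\<alpha> \<noteq> 0" "\<alpha> \<noteq> -1"
  shows "\<alpha> \<in> join_Lambda m A"
proof -
  obtain g \<beta> where g: "g \<noteq> 0" "A *v g = \<alpha> *\<^sub>R g + \<beta> *\<^sub>R all_ones_vec"
    and secular: "(\<alpha> + 2 * real m) * (all_ones_vec \<bullet> g) = real m * \<beta>"
    using assms(2) unfolding reduced_join_ev_def by blast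
  consider "\<alpha> = - real m" | "\<alpha> = - 2 * real m"
    | "\<alpha> \<noteq> - real m" "\<alpha> \<noteq> - 2 * real m" "\<alpha> \<in> ev A"
    | "\<alpha> \<noteq> - real m" "\<alpha> \<noteq> - 2 * real m" "\<alpha> \<notin> ev A"
    by blast
  then show ?thesis
  proof cases
    case 1
    with assms(3,4) have "m \<ge> 2" by auto
    with 1 secular have "\<beta> = all_ones_vec \<bullet> g" by simp
    with 1 g(2) have "(all_ones_matrix - A) *v g = real m *\<^sub>R g"
      by (simp add: matrix_vector_mult_diff_rdistrib all_ones_matrix_mult)
    with g(1) have "real m \<in> ev (all_ones_matrix - A)"
      unfolding ev_def by blast
    with 1 \<open>m \<ge> 2\<close> show ?thesis
      unfolding join_Lambda_def by simp
  next
    case 2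
    with assms(3) secular have "\<beta> = 0" by simp
    with 2 g have "- 2 * real m \<in> ev A"
      unfolding ev_def by auto
    with 2 show ?thesis
      unfolding join_Lambda_def by simp
  next
    case 3
    with unit_perp_eigenvector_if_reduced_join_ev[OF sym _ g(2) secular g(1)] assms(3) show ?thesis
      unfolding join_Lambda_def by simp
  next
    case 4
    with secular_if_reduced_join_ev[OF _ g(2,1) secular] assms(3) show ?thesis
      unfolding join_Lambda_def by simp
  qed
qed

lemma Min_join_Lambda:
  fixes E :: "'n::finite \<Rightarrow> 'n \<Rightarrow> bool"
  assumes sym: "\<And>x y. E x y \<Longrightarrow> E y x"
    and min: "ones_perp_minimizer (adj_matrix (join_empty E :: ('m::finite + 'n) \<Rightarrow> _)) f0"
    and lt: "f0 \<bullet> (adj_matrix (join_empty E) *v f0) < -1"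
  shows "Min (join_Lambda CARD('m) (adj_matrix E)) = f0 \<bullet> (adj_matrix (join_empty E) *v f0)"
proof (rule Min_eqI)
  let ?M = "adj_matrix (join_empty E :: ('m + 'n) \<Rightarrow> _)"
  have Lambda_subset: "join_Lambda CARD('m) (adj_matrix E) \<subseteq> ones_perp_ev ?M"
    using join_Lambda_subset_reduced_join_ev reduced_join_ev_subset_ones_perp_ev by blast
  then show "finite (join_Lambda CARD('m) (adj_matrix E))"
    using finite_ones_perp_ev finite_subset by blast
  show "f0 \<bullet> (?M *v f0) \<le> \<alpha>" if "\<alpha> \<in> join_Lambda CARD('m) (adj_matrix E)" for \<alpha>
    using that Lambda_subset ones_perp_minimizer_le_ones_perp_ev[OF min] by blast
  have "transpose ?M = ?M"
    by (rule transpose_adj_matrix) (use join_empty_sym[where E = E, OF sym] in blast)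
  from ones_perp_minimizer_in_ones_perp_ev[OF this min] lt
  show "f0 \<bullet> (?M *v f0) \<in> join_Lambda CARD('m) (adj_matrix E)"
    by (intro join_Lambda_if_reduced_join_ev transpose_adj_matrix[OF sym] reduced_join_ev_if_ones_perp_ev) auto
qed

theorem theorem3p7:
  fixes E :: "'n::finite \<Rightarrow> 'n \<Rightarrow> bool"
    and m :: nat
    and \<Lambda>0 \<Lambda>1 \<Lambda>2 \<Lambda>3 :: "real set"
    and A :: "real^'n^'n"
  assumes sym: "\<And>x y. E x y \<Longrightarrow> E y x"
    and irrefl: "\<And>x. \<not> E x x"
    and m_def: "m = CARD('m::finite)"
    and not_complete: "\<not> complete_graph (join_empty E :: ('m + 'n) \<Rightarrow> ('m + 'n) \<Rightarrow> bool)"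
    and A_def: "A = adj_matrix E"
    and L0: "\<Lambda>0 = (if m \<ge> 2 \<and> real m \<in> ev (all_ones_matrix - A) then {- real m} else {})"
    and L1: "\<Lambda>1 = {\<alpha>. \<alpha> \<notin> ev A \<union> {0, - real m, - 2 * real m} \<and>
               (\<alpha> + 2 * real m) * (all_ones_vec \<bullet> (matrix_inv (A - \<alpha> *\<^sub>R mat 1) *v all_ones_vec))
                 - real m = 0}"
    and L2: "\<Lambda>2 = (if - 2 * real m \<in> ev A then {- 2 * real m} else {})"
    and L3: "\<Lambda>3 = {\<alpha>. \<alpha> \<in> ev A - {0, - real m, - 2 * real m} \<and>
               (\<exists>g. A *v g = \<alpha> *\<^sub>R g \<and> g \<bullet> g = 1 \<and> all_ones_vec \<bullet> g = 0)}"
  shows "QEC (join_empty E :: ('m + 'n) \<Rightarrow> ('m + 'n) \<Rightarrow> bool) = - Min (\<Lambda>0 \<union> \<Lambda>1 \<union> \<Lambda>2 \<union> \<Lambda>3) - 2"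
proof -
  let ?H = "join_empty E :: ('m + 'n) \<Rightarrow> ('m + 'n) \<Rightarrow> bool"
  let ?M = "adj_matrix ?H"
  have sym_H: "\<And>u v. ?H u v \<Longrightarrow> ?H v u" and irrefl_H: "\<And>u. \<not> ?H u u"
    using join_empty_sym[where E = E, OF sym] join_empty_irrefl[where E = E, OF irrefl] by blast+
  have common: "\<And>u v. \<not> ?H u v \<Longrightarrow> \<exists>w. ?H u w \<and> ?H w v"
    by (rule join_empty_common_neighbour)
  obtain x y where "x \<noteq> y" "\<not> ?H x y"
    using not_complete unfolding complete_graph_def by blast
  moreover obtain z where "?H x z" "?H z y"
    using common[OF \<open>\<not> ?H x y\<close>] by blast
  moreover obtain f0 where min: "ones_perp_minimizer ?M f0"
    using ones_perp_minimizer_exists[OF \<open>x \<noteq> y\<close>] .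
  ultimately have "f0 \<bullet> (?M *v f0) < -1"
    by (intro ones_perp_minimizer_lt_neg_one[OF sym_H irrefl_H])
  then have "Min (join_Lambda m A) = f0 \<bullet> (?M *v f0)"
    using Min_join_Lambda[OF sym min] by (simp add: m_def A_def)
  moreover have "\<Lambda>0 \<union> \<Lambda>1 \<union> \<Lambda>2 \<union> \<Lambda>3 = join_Lambda m A"
    unfolding L0 L1 L2 L3 join_Lambda_def ..
  ultimately show ?thesis
    using QEC_if_common_neighbour[OF irrefl_H common min] by simp
qed

end
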